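(* Let $F$ be a cellular automaton on $A^{\mathbb N}$. Then $\mathfrak d_L(F(x),x)=0$ for all $x\in A^{\mathbb N}$ if and only if there exists $k\in\mathbb N$ such that $F=\sigma^k$.
   Context: $A$ is a finite alphabet; $\sigma(x)_i=x_{i+1}$; $x_{[i,j)}=x_i\cdots x_{j-1}$. A cellular automaton with diameter $\delta\ge1$ is $F(x)_i=f(x_{[i,i+\delta)})$ for a local rule $f:A^\delta\to A$. The Levenshtein distance is $d_L(u,v)=\frac{|u|+|v|}{2}-\ell$, $\ell$ the length of a longest common subsequence of $u,v$; the Feldman pseudo-metric is $\mathfrak d_L(x,y)=\limsup_{l\to\infty}d_L(x_{[0,l)},y_{[0,l)})/l$. *)

theory Defs
  imports Complex_Main "HOL-Library.Sublist" "HOL-Library.Liminf_Limsup" "HOL-Library.Extended_Real"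
begin

definition shift :: "(nat \<Rightarrow> 'a) \<Rightarrow> (nat \<Rightarrow> 'a)" where
  "shift x = (\<lambda>i. x (Suc i))"

definition is_CA :: "((nat \<Rightarrow> 'a::finite) \<Rightarrow> (nat \<Rightarrow> 'a)) \<Rightarrow> bool" where
  "is_CA F \<longleftrightarrow> (\<exists>(\<delta>::nat) (f :: 'a list \<Rightarrow> 'a). \<delta> \<ge> 1 \<and>
      (\<forall>x i. F x i = f (map x [i..<i+\<delta>])))"

definition prefix_word :: "(nat \<Rightarrow> 'a) \<Rightarrow> nat \<Rightarrow> 'a list" where
  "prefix_word x l = map x [0..<l]"

definition lcs_len :: "'a list \<Rightarrow> 'a list \<Rightarrow> nat" where
  "lcs_len u v = Max {length w | w. subseq w u \<and> subseq w v}"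

definition lev_dist :: "'a list \<Rightarrow> 'a list \<Rightarrow> real" where
  "lev_dist u v = (real (length u) + real (length v)) / 2 - real (lcs_len u v)"

definition feldman :: "(nat \<Rightarrow> 'a) \<Rightarrow> (nat \<Rightarrow> 'a) \<Rightarrow> ereal" where
  "feldman x y = limsup (\<lambda>l. ereal (lev_dist (prefix_word x l) (prefix_word y l) / real l))"

end

(*
  If F = shift^k, dropping the first k letters of the length-l prefix of x gives a common
  subsequence of the two prefixes, so their Levenshtein distance is at most k and the density
  k / l tends to 0.

  Conversely, if two words have no common factor (contiguous subword) of length p, then every
  common subsequence splits into at most 1 + #deletions runs that are common factors, so
  prefixes of length l >= 2p are at Levenshtein distance at least l / (4p). Now run F on the
  periodic configuration x = (d W d c^n)^omega, where c /= d, W contains every word of length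
  delta and n is large. F x has the same period p as x, so if F x and x are at Feldman
  distance 0 they share a factor of length p and therefore F x = shift^m x for some m < p.
  The long block of c's, flanked by the letters d, forces m < delta, and reading F x across
  the occurrence in W of an arbitrary word u of length delta gives f u = u ! m, i.e.
  F = shift^m.
*)
theory Submission
  imports Defs
begin

lemma funpow_shift_apply: "(shift ^^ k) x i = x (i + k)"
  by (induction k arbitrary: i) (auto simp: shift_def)

lemma length_prefix_word [simp]: "length (prefix_word x l) = l"
  by (simp add: prefix_word_def)

lemma sublist_prefix_wordE:
  assumes "sublist g (prefix_word x l)"
  obtains j where "g = map x [j..<j + length g]"
proof -
  obtain ps ss where split: "prefix_word x l = ps @ g @ ss"
    using assms unfolding sublist_def by blast
  have "length ps + length g \<le> l"
    using arg_cong[OF split, of length] by simp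
  moreover have "g = take (length g) (drop (length ps) (prefix_word x l))"
    by (simp add: split)
  ultimately have "g = map x [length ps..<length ps + length g]"
    by (simp add: prefix_word_def drop_map take_map)
  then show thesis by (rule that)
qed

lemma finite_common_subseq_lengths: "finite {length w | w. subseq w u \<and> subseq w v}"
  by (rule finite_subset[of _ "{..length u}"]) (auto dest: list_emb_length)

lemma lcs_len_ge: "subseq w u \<Longrightarrow> subseq w v \<Longrightarrow> length w \<le> lcs_len u v"
  unfolding lcs_len_def by (rule Max_ge[OF finite_common_subseq_lengths]) blast

lemma lcs_len_witness:
  obtains w where "subseq w u" "subseq w v" "length w = lcs_len u v"
proof -
  have "lcs_len u v \<in> {length w | w. subseq w u \<and> subseq w v}"
    unfolding lcs_len_def by (rule Max_in[OF finite_common_subseq_lengths]) auto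
  then show thesis
    using that by (auto simp del: subseq_Cons2_iff)
qed

lemma lcs_len_le_length: "lcs_len u v \<le> length u" "lcs_len u v \<le> length v"
proof -
  obtain w where "subseq w u" "subseq w v" "length w = lcs_len u v"
    by (rule lcs_len_witness)
  then show "lcs_len u v \<le> length u" "lcs_len u v \<le> length v"
    by (auto dest: list_emb_length)
qed

lemma lev_dist_same_length: "length u = length v \<Longrightarrow> lev_dist u v = real (length u) - real (lcs_len u v)"
  by (simp add: lev_dist_def)

lemma lcs_len_prefix_word_shift: "l - k \<le> lcs_len (prefix_word ((shift ^^ k) x) l) (prefix_word x l)"
proof -
  have "drop k (prefix_word x l) = take (l - k) (prefix_word ((shift ^^ k) x) l)"
    by (rule nth_equalityI) (auto simp: prefix_word_def funpow_shift_apply add.commute)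
  then have "subseq (drop k (prefix_word x l)) (prefix_word ((shift ^^ k) x) l)"
    by (metis prefix_imp_subseq take_is_prefix)
  moreover have "subseq (drop k (prefix_word x l)) (prefix_word x l)"
    by (simp add: suffix_drop suffix_imp_subseq)
  ultimately show ?thesis
    using lcs_len_ge by fastforce
qed

lemma feldman_shift_self: "feldman ((shift ^^ k) x) x = 0"
proof -
  define r where "r l = lev_dist (prefix_word ((shift ^^ k) x) l) (prefix_word x l) / real l" for l
  have r_bounds: "0 \<le> r l" "r l \<le> real k / real l" for l
  proof -
    let ?L = "lcs_len (prefix_word ((shift ^^ k) x) l) (prefix_word x l)"
    have "real l - real k \<le> real ?L" "?L \<le> l"
      using lcs_len_prefix_word_shift[of l k x] lcs_len_le_length(2)[of _ "prefix_word x l"] by auto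
    then have "0 \<le> real l - real ?L" "real l - real ?L \<le> real k"
      by linarith+
    then show "0 \<le> r l" "r l \<le> real k / real l"
      unfolding r_def by (simp_all add: lev_dist_same_length divide_right_mono)
  qed
  have "r \<longlonglongrightarrow> 0"
    by (rule real_tendsto_sandwich[of "\<lambda>_. 0" r sequentially "\<lambda>l. real k / real l"])
       (simp_all add: r_bounds lim_const_over_n)
  then have "limsup (\<lambda>l. ereal (r l)) = 0"
    using lim_imp_Limsup[of sequentially "\<lambda>l. ereal (r l)" 0] by (simp add: zero_ereal_def)
  then show ?thesis
    unfolding feldman_def r_def .
qed

definition common_sublists_shorter :: "nat \<Rightarrow> 'a list \<Rightarrow> 'a list \<Rightarrow> bool" where
  "common_sublists_shorter p u v \<longleftrightarrow> (\<forall>g. sublist g u \<longrightarrow> sublist g v \<longrightarrow> length g < p)"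

lemma common_sublists_shorter_mono:
  "common_sublists_shorter p u v \<Longrightarrow> sublist u' u \<Longrightarrow> sublist v' v \<Longrightarrow>
    common_sublists_shorter p u' v'"
  unfolding common_sublists_shorter_def by (meson sublist_order.order_trans)

text \<open>In the induction, z is the current run of letters matched consecutively in both words; it
  is a common factor, and each deletion of a letter starts a new run.\<close>

lemma common_subseq_length_bound:
  assumes "common_sublists_shorter p (z @ u) (z @ v)" "subseq w u" "subseq w v"
  shows "length z + length w \<le> (p - 1) * (1 + length u + length v - 2 * length w)"
  using assms
proof (induction "length u + length v" arbitrary: u v w z rule: less_induct)
  case less
  have "length z < p"
    using less.prems(1) unfolding common_sublists_shorter_def by (meson sublist_append_rightI)
  then have z: "length z \<le> p - 1"
    by simp
  have w: "length w \<le> length u" "length w \<le> length v"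
    using less.prems(2,3) by (auto dest: list_emb_length)
  show ?case
  proof (cases w)
    case Nil
    then show ?thesis using z by simp
  next
    case (Cons c w')
    then obtain a u' b v' where u: "u = a # u'" and v: "v = b # v'"
      using less.prems(2,3) by (cases u; cases v) auto
    consider "c = a" "c = b" | "c \<noteq> a" | "c \<noteq> b" by blast
    then show ?thesis
    proof cases
      case 1
      have "common_sublists_shorter p ((z @ [a]) @ u') ((z @ [a]) @ v')"
        using less.prems(1) 1 by (simp add: u v)
      moreover have "subseq w' u'" "subseq w' v'"
        using less.prems(2,3) 1 by (simp_all add: Cons u v)
      ultimately have
        "length (z @ [a]) + length w' \<le> (p - 1) * (1 + length u' + length v' - 2 * length w')"
        by (intro less.hyps) (simp_all add: u v)
      then show ?thesis by (simp add: Cons u v)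
    next
      case 2
      have "common_sublists_shorter p ([] @ u') ([] @ v)"
        using less.prems(1) by (rule common_sublists_shorter_mono)
          (use sublist_append_leftI[of u' "z @ [a]"] in \<open>simp_all add: u\<close>)
      moreover have "subseq w u'"
        using less.prems(2) 2 by (simp add: Cons u)
      ultimately have "length w \<le> (p - 1) * (1 + length u' + length v - 2 * length w)"
        using less.hyps[of u' v "[]" w] less.prems(3) by (simp add: u)
      moreover have "length w \<le> length u'"
        using \<open>subseq w u'\<close> by (rule list_emb_length)
      then have "1 + length u + length v - 2 * length w = Suc (1 + length u' + length v - 2 * length w)"
        using w by (simp add: u)
      ultimately show ?thesis
        using z by simp
    next
      case 3
      have "common_sublists_shorter p ([] @ u) ([] @ v')"
        using less.prems(1) by (rule common_sublists_shorter_mono)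
          (use sublist_append_leftI[of v' "z @ [b]"] in \<open>simp_all add: v\<close>)
      moreover have "subseq w v'"
        using less.prems(3) 3 by (simp add: Cons v)
      ultimately have "length w \<le> (p - 1) * (1 + length u + length v' - 2 * length w)"
        using less.hyps[of u v' "[]" w] less.prems(2) by (simp add: v)
      moreover have "length w \<le> length v'"
        using \<open>subseq w v'\<close> by (rule list_emb_length)
      then have "1 + length u + length v - 2 * length w = Suc (1 + length u + length v' - 2 * length w)"
        using w by (simp add: v)
      ultimately show ?thesis
        using z by simp
    qed
  qed
qed

lemma lev_dist_lower_bound:
  assumes "common_sublists_shorter p u v" "length u = length v"
  shows "real (length u) \<le> real p + 2 * real p * lev_dist u v"
proof -
  define l L where "l = length u" and "L = lcs_len u v"
  define e where "e = real l - real L"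
  obtain w where w: "subseq w u" "subseq w v" "length w = L"
    unfolding L_def by (rule lcs_len_witness)
  have "L \<le> l" "1 \<le> p"
    using lcs_len_le_length(1)[of u v] assms(1) unfolding l_def L_def common_sublists_shorter_def
    by auto
  have "length ([] :: 'a list) + length w \<le> (p - 1) * (1 + length u + length v - 2 * length w)"
    by (rule common_subseq_length_bound) (use assms w in simp_all)
  then have "L \<le> (p - 1) * (1 + l + l - 2 * L)"
    using assms(2) w(3) unfolding l_def by simp
  then have "real L \<le> real ((p - 1) * (1 + l + l - 2 * L))"
    by (simp only: of_nat_le_iff)
  also have "\<dots> = (real p - 1) * (1 + 2 * e)"
    unfolding e_def using \<open>L \<le> l\<close> \<open>1 \<le> p\<close> by (simp add: of_nat_diff)
  finally have "real L \<le> real p - 1 + 2 * real p * e - 2 * e"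
    by (simp add: algebra_simps)
  moreover have "lev_dist u v = e"
    unfolding e_def l_def L_def using assms(2) by (rule lev_dist_same_length)
  ultimately show ?thesis
    using \<open>L \<le> l\<close> unfolding l_def[symmetric] e_def by simp
qed

lemma feldman_lower_bound:
  assumes "0 < p" "\<And>l. common_sublists_shorter p (prefix_word y l) (prefix_word x l)"
  shows "ereal (1 / (4 * real p)) \<le> feldman y x"
proof -
  have "1 / (4 * real p) \<le> lev_dist (prefix_word y l) (prefix_word x l) / real l"
    if "2 * p \<le> l" for l
  proof -
    have "real l \<le> real p + 2 * real p * lev_dist (prefix_word y l) (prefix_word x l)"
      using lev_dist_lower_bound[OF assms(2)[of l]] by simp
    with that assms(1) show ?thesis
      by (simp add: field_simps)
  qed
  then show ?thesis
    unfolding feldman_def by (intro le_Limsup) (auto simp: eventually_sequentially)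
qed

lemma periodic_add_mult:
  fixes g :: "nat \<Rightarrow> 'a"
  assumes "\<And>a. g (a + p) = g a"
  shows "g (a + k * p) = g a"
proof (induction k)
  case (Suc k)
  then show ?case
    using assms[of "a + k * p"] by (simp add: ac_simps)
qed simp

lemma periodic_mod:
  fixes g :: "nat \<Rightarrow> 'a"
  assumes "\<And>a. g (a + p) = g a"
  shows "g a = g (a mod p)"
  using periodic_add_mult[of g p "a mod p" "a div p", OF assms] by (metis mod_div_mult_eq)

lemma periodic_window_imp_shift:
  fixes g1 g2 :: "nat \<Rightarrow> 'a"
  assumes "0 < p" and g1: "\<And>a. g1 (a + p) = g1 a" and g2: "\<And>a. g2 (a + p) = g2 a"
    and window: "\<And>t. t < p \<Longrightarrow> g1 (j + t) = g2 (i + t)"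
  shows "\<exists>m<p. \<forall>s. g1 s = g2 (s + m)"
proof -
  have agree: "g1 (j + t) = g2 (i + t)" for t
  proof -
    have "g1 (j + t) = g1 ((j + t mod p) mod p)"
      by (simp add: periodic_mod[of g1 p, OF g1, of "j + t"] mod_add_right_eq)
    also have "\<dots> = g2 ((i + t mod p) mod p)"
      using window[of "t mod p"] \<open>0 < p\<close>
      by (simp flip: periodic_mod[of g1 p, OF g1] periodic_mod[of g2 p, OF g2])
    also have "\<dots> = g2 (i + t)"
      by (simp add: periodic_mod[of g2 p, OF g2, of "i + t"] mod_add_right_eq)
    finally show ?thesis .
  qed
  define m where "m = (i + j * (p - 1)) mod p"
    \<comment> \<open>i - j modulo p, written without truncated subtraction\<close>
  have "g1 s = g2 (s + m)" for s
  proof -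
    have "s + j * p = j + (s + j * (p - 1))"
      using \<open>0 < p\<close> by (cases p) simp_all
    then have "g1 s = g1 (j + (s + j * (p - 1)))"
      using periodic_add_mult[of g1 p s j, OF g1] by (simp only:)
    also have "\<dots> = g2 (s + (i + j * (p - 1)))"
      by (simp add: agree ac_simps)
    also have "\<dots> = g2 (s + m)"
      unfolding m_def by (simp add: periodic_mod[of g2 p, OF g2, of "s + _"] mod_add_right_eq)
    finally show ?thesis .
  qed
  moreover have "m < p"
    unfolding m_def using \<open>0 < p\<close> by simp
  ultimately show ?thesis by blast
qed

lemma periodic_feldman_zero_imp_shift:
  fixes y x :: "nat \<Rightarrow> 'a"
  assumes "0 < p" "\<And>a. y (a + p) = y a" "\<And>a. x (a + p) = x a" "feldman y x = 0"
  shows "\<exists>m<p. \<forall>s. y s = x (s + m)"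
proof -
  have "\<not> (\<forall>l. common_sublists_shorter p (prefix_word y l) (prefix_word x l))"
  proof
    assume "\<forall>l. common_sublists_shorter p (prefix_word y l) (prefix_word x l)"
    then have "ereal (1 / (4 * real p)) \<le> 0"
      using feldman_lower_bound[OF \<open>0 < p\<close>, of y x] assms(4) by simp
    then show False
      using \<open>0 < p\<close> by simp
  qed
  then obtain l g where g: "sublist g (prefix_word y l)" "sublist g (prefix_word x l)" "p \<le> length g"
    unfolding common_sublists_shorter_def by auto
  obtain j where j: "g = map y [j..<j + length g]"
    using g(1) by (rule sublist_prefix_wordE)
  obtain i where i: "g = map x [i..<i + length g]"
    using g(2) by (rule sublist_prefix_wordE)
  have "y (j + t) = x (i + t)" if "t < p" for t
    using arg_cong[OF j, of "\<lambda>g. g ! t"] arg_cong[OF i, of "\<lambda>g. g ! t"] that g(3) by simp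
  then show ?thesis
    using periodic_window_imp_shift assms(1-3) by blast
qed

lemma local_rule_periodic:
  assumes "\<And>y i. F y i = f (map y [i..<i + \<delta>])" "\<And>a. x (a + p) = x a"
  shows "F x (a + p) = F x a"
proof -
  have "x (a + p + k) = x (a + k)" for k
    using assms(2)[of "a + k"] by (simp add: ac_simps)
  then have "map x [a + p..<a + p + \<delta>] = map x [a..<a + \<delta>]"
    by (intro nth_equalityI) simp_all
  then show ?thesis
    using assms(1) by simp
qed

lemma word_containing_all_wordsE:
  obtains W :: "'a::finite list" where "\<And>u. length u = n \<Longrightarrow> sublist u W"
proof -
  obtain letters :: "'a list" where "set letters = UNIV"
    using finite_list[OF finite_UNIV] by blast
  have "sublist u (concat (List.n_lists n letters))" if "length u = n" for u
  proof -
    have "u \<in> set (List.n_lists n letters)"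
      using that \<open>set letters = UNIV\<close> by (simp add: set_n_lists)
    then obtain us vs where "List.n_lists n letters = us @ u # vs"
      by (meson split_list)
    then show ?thesis
      by (simp add: sublist_appendI)
  qed
  then show thesis by (rule that)
qed

definition periodic_ext :: "'a list \<Rightarrow> nat \<Rightarrow> 'a" where
  "periodic_ext P i = P ! (i mod length P)"

lemma periodic_ext_add_length [simp]: "periodic_ext P (i + length P) = periodic_ext P i"
  by (simp add: periodic_ext_def)

lemma periodic_ext_nth: "i < length P \<Longrightarrow> periodic_ext P i = P ! i"
  by (simp add: periodic_ext_def)

definition probe_word :: "'a \<Rightarrow> 'a \<Rightarrow> nat \<Rightarrow> 'a list \<Rightarrow> 'a list" where
  "probe_word c d \<delta> W = d # W @ d # replicate (length W + 2 + 2 * \<delta>) c"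

lemma length_probe_word: "length (probe_word c d \<delta> W) = 2 * length W + 2 * \<delta> + 4"
  by (simp add: probe_word_def)

lemma probe_word_nth:
  "probe_word c d \<delta> W ! 0 = d"
  "probe_word c d \<delta> W ! (length W + 1) = d"
  "i < length W \<Longrightarrow> probe_word c d \<delta> W ! Suc i = W ! i"
  "length W + 2 \<le> i \<Longrightarrow> i < length (probe_word c d \<delta> W) \<Longrightarrow> probe_word c d \<delta> W ! i = c"
  by (auto simp: probe_word_def nth_append nth_Cons')

text \<open>The windows of F inside the block of c's all read the same word; shifted by m \<ge> \<delta> they
  would land on a d as well as on a c.\<close>

lemma probe_shift_less_diameter:
  fixes c d :: 'a and \<delta> :: nat and W :: "'a list"
  defines "P \<equiv> probe_word c d \<delta> W"
  assumes "c \<noteq> d" "1 \<le> \<delta>" "m < length P"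
    and const:
      "\<And>s. length W + 2 \<le> s \<Longrightarrow> s + \<delta> \<le> length P \<Longrightarrow> periodic_ext P (s + m) = e"
  shows "m < \<delta>"
proof -
  let ?K = "length W + 2" and ?p = "length P"
  have p: "?p = 2 * length W + 2 * \<delta> + 4"
    unfolding P_def by (rule length_probe_word)
  have x_c: "periodic_ext P i = c" if "?K \<le> i" "i < ?p" for i
    using that probe_word_nth(4) unfolding P_def by (simp add: periodic_ext_nth)
  have x_d: "periodic_ext P ?p = d" "periodic_ext P (?p + ?K - 1) = d"
    using periodic_ext_add_length[of P 0] periodic_ext_add_length[of P "?K - 1"] probe_word_nth(1,2)
    unfolding P_def by (simp_all add: periodic_ext_nth length_probe_word ac_simps)
  have x_c': "periodic_ext P (?p + ?K) = c"
    using periodic_ext_add_length[of P ?K] x_c[of ?K] p by (simp add: ac_simps)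
  show ?thesis
  proof (cases "m \<le> ?K + \<delta>")
    case True
    then have "e = c"
      using const[of ?K] x_c[of "?K + m"] p \<open>1 \<le> \<delta>\<close> by simp
    show ?thesis
    proof (rule ccontr)
      assume "\<not> m < \<delta>"
      then have "periodic_ext P ?p = e"
        using const[of "?p - m"] True p by simp
      then show False
        using x_d(1) \<open>e = c\<close> \<open>c \<noteq> d\<close> by simp
    qed
  next
    case False
    then have "periodic_ext P (?p + ?K) = e" "periodic_ext P (?p + ?K - 1) = e"
      using const[of "?p + ?K - m"] const[of "?p + ?K - 1 - m"] \<open>m < ?p\<close> p by simp_all
    then show ?thesis
      using x_c' x_d(2) \<open>c \<noteq> d\<close> by simp
  qed
qed

lemma local_rule_shift_on_probe_imp_shift:
  fixes F :: "(nat \<Rightarrow> 'a) \<Rightarrow> nat \<Rightarrow> 'a" and c d :: 'a and \<delta> :: nat and W :: "'a list"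
  defines "P \<equiv> probe_word c d \<delta> W"
  assumes F: "\<And>y i. F y i = f (map y [i..<i + \<delta>])" and "1 \<le> \<delta>" "c \<noteq> d"
    and W: "\<And>u. length u = \<delta> \<Longrightarrow> sublist u W"
    and "m < length P" and shifted: "\<And>s. F (periodic_ext P) s = periodic_ext P (s + m)"
  shows "F = shift ^^ m"
proof -
  let ?x = "periodic_ext P"
  have "m < \<delta>"
  proof (rule probe_shift_less_diameter[where c = c and d = d and \<delta> = \<delta> and W = W, folded P_def])
    fix s assume s: "length W + 2 \<le> s" "s + \<delta> \<le> length P"
    have "map ?x [s..<s + \<delta>] = replicate \<delta> c"
      using s unfolding P_def by (intro nth_equalityI) (simp_all add: periodic_ext_nth probe_word_nth(4))
    then show "?x (s + m) = f (replicate \<delta> c)"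
      using shifted[of s] F[of ?x s] by simp
  qed (use assms in simp_all)
  have f: "f u = u ! m" if u: "length u = \<delta>" for u
  proof -
    obtain us vs where W_split: "W = us @ u @ vs"
      using W[OF u] unfolding sublist_def by blast
    define t where "t = Suc (length us)"
    have x_u: "?x (t + k) = u ! k" if "k < \<delta>" for k
    proof -
      have "length us + k < length W"
        using that u W_split by simp
      then have "?x (t + k) = W ! (length us + k)"
        unfolding P_def t_def by (simp add: periodic_ext_nth length_probe_word probe_word_nth(3))
      then show ?thesis
        using that u W_split by (simp add: nth_append)
    qed
    then have "map ?x [t..<t + \<delta>] = u"
      using u by (intro nth_equalityI) simp_all
    then have "f u = F ?x t"
      using F[of ?x t] by simp
    also have "\<dots> = u ! m"
      using shifted[of t] x_u[OF \<open>m < \<delta>\<close>] by simp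
    finally show ?thesis .
  qed
  show ?thesis
  proof (intro ext)
    fix y i
    show "F y i = (shift ^^ m) y i"
      using F[of y i] f[of "map y [i..<i + \<delta>]"] \<open>m < \<delta>\<close> by (simp add: funpow_shift_apply add.commute)
  qed
qed

lemma local_rule_feldman_zero_imp_shift:
  fixes F :: "(nat \<Rightarrow> 'a::finite) \<Rightarrow> nat \<Rightarrow> 'a"
  assumes F: "\<And>y i. F y i = f (map y [i..<i + \<delta>])" and "1 \<le> \<delta>"
    and zero: "\<And>x. feldman (F x) x = 0"
  shows "\<exists>k. F = shift ^^ k"
proof (cases "\<exists>c d :: 'a. c \<noteq> d")
  case False
  then have "F = shift ^^ 0"
    by (intro ext) auto
  then show ?thesis ..
next
  case True
  then obtain c d :: 'a where "c \<noteq> d" by blast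
  obtain W :: "'a list" where W: "\<And>u. length u = \<delta> \<Longrightarrow> sublist u W"
    using word_containing_all_wordsE by blast
  define P where "P = probe_word c d \<delta> W"
  have "0 < length P"
    unfolding P_def length_probe_word by simp
  have P_periodic: "periodic_ext P (a + length P) = periodic_ext P a" for a
    by simp
  obtain m where m: "m < length P" "\<And>s. F (periodic_ext P) s = periodic_ext P (s + m)"
    using periodic_feldman_zero_imp_shift[of "length P" "F (periodic_ext P)" "periodic_ext P"]
      local_rule_periodic[of F f \<delta> "periodic_ext P", OF F P_periodic] P_periodic
      \<open>0 < length P\<close> zero by blast
  have "F = shift ^^ m"
    using local_rule_shift_on_probe_imp_shift[where F = F and f = f, OF F \<open>1 \<le> \<delta>\<close> \<open>c \<noteq> d\<close> W]
      m unfolding P_def by blast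
  then show ?thesis ..
qed

theorem mainTheorem10:
  fixes F :: "(nat \<Rightarrow> 'a::finite) \<Rightarrow> (nat \<Rightarrow> 'a)"
  assumes "is_CA F"
  shows "(\<forall>x. feldman (F x) x = 0) \<longleftrightarrow> (\<exists>k::nat. F = shift ^^ k)"
proof
  assume "\<exists>k. F = shift ^^ k"
  then show "\<forall>x. feldman (F x) x = 0"
    using feldman_shift_self by blast
next
  assume "\<forall>x. feldman (F x) x = 0"
  moreover obtain \<delta> f where "1 \<le> \<delta>" and "\<And>y i. F y i = f (map y [i..<i + \<delta>])"
    using assms unfolding is_CA_def by auto
  ultimately show "\<exists>k. F = shift ^^ k"
    using local_rule_feldman_zero_imp_shift by blast
qed

end
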